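(* Let $T\subset\mathbb R^2$ be a triangle all of whose interior angles are at least $\omega_0\in(0,\pi/3]$, and set $$c_{inv}^2:=24\cot(\omega_0)\Big(2\cot(\omega_0)-\cot(2\omega_0)+\big((2\cot(\omega_0)-\cot(2\omega_0))^2-3\big)^{1/2}\Big).$$ Then every affine function $p_1$ on $T$ satisfies $\|\nabla p_1\|_{L^2(T)}\le c_{inv}\,h_T^{-1}\|p_1\|_{L^2(T)}$.
   Context: $h_T=\operatorname{diam}(T)$. *)

theory Defs
  imports "HOL-Analysis.Analysis"
begin

definition tri_angle :: "real^2 \<Rightarrow> real^2 \<Rightarrow> real^2 \<Rightarrow> real" where
  "tri_angle a b c = arccos (inner (b - a) (c - a) / (norm (b - a) * norm (c - a)))"

definition c_inv :: "real \<Rightarrow> real" where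
  "c_inv \<omega>0 = sqrt (24 * cot \<omega>0 * (2 * cot \<omega>0 - cot (2 * \<omega>0)
      + sqrt ((2 * cot \<omega>0 - cot (2 * \<omega>0))^2 - 3)))"

end

theory Submission
  imports Defs
begin

text \<open>On a triangle T the squared L2 norm of an affine function p is determined by its vertex values:
  integral of p^2 over T = |T|/12 (p(a)^2 + p(b)^2 + p(c)^2 + (p(a) + p(b) + p(c))^2).
  Instead of a change of variables to a reference triangle, this follows from self-similarity:
  T is the union of its images under four homotheties of ratio +-1/2, which turns the first and
  second moments of a linear function into solutions of linear equations. Dropping a square
  gives integral of p^2 >= |T|/36 times the sum of the squared differences of p along the edges.
  Conversely, if all angles are at least w <= pi/3, then tan(w)^2 h_T^2 |grad p|^2 is at most
  twice that sum: normalising the longest edge to [0,1], this is the positive semidefiniteness of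
  a 2x2 quadratic form, whose determinant condition is where the angle bound enters. As
  c_inv(w)^2 = 72 cot(w)^2, the two estimates combine to the claim.\<close>

section \<open>Barycentric coordinates in the plane\<close>

definition cross2 :: "real^2 \<Rightarrow> real^2 \<Rightarrow> real" where
  "cross2 u v = u$1 * v$2 - u$2 * v$1"

lemma inner_vec2: "inner (u::real^2) v = u$1 * v$1 + u$2 * v$2"
  by (simp add: inner_vec_def sum_2)

lemma inner_square_add_cross2_square: "(inner u v)\<^sup>2 + (cross2 u v)\<^sup>2 = inner u u * inner v v"
  by (simp add: inner_vec2 cross2_def power2_eq_square algebra_simps)

lemma inner_cross2_expansion: "inner u u * inner v w = inner u v * inner u w + cross2 u v * cross2 u w"
  by (simp add: inner_vec2 cross2_def algebra_simps)

lemma cross2_cramer: "cross2 u w *\<^sub>R y = cross2 y w *\<^sub>R u + cross2 u y *\<^sub>R w"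
  by (simp add: vec_eq_iff forall_2 cross2_def algebra_simps)

lemma cross2_rotate: "cross2 (c - b) (a - b) = cross2 (b - a) (c - a)"
  by (simp add: cross2_def algebra_simps)

definition homothety :: "real \<Rightarrow> 'a::real_vector \<Rightarrow> 'a \<Rightarrow> 'a" where
  "homothety m z x = m *\<^sub>R x + (1 - m) *\<^sub>R z"

lemma homothety_inverse:
  assumes "m \<noteq> 0"
  shows "homothety (1 / m) z (homothety m z x) = x"
  using assms by (simp add: homothety_def algebra_simps)

definition bary :: "real^2 \<Rightarrow> real^2 \<Rightarrow> real^2 \<Rightarrow> real^2 \<Rightarrow> real" where
  "bary a b c x = cross2 (b - x) (c - x) / cross2 (b - a) (c - a)"

lemma bary_convex_combination:
  assumes "cross2 (b - a) (c - a) \<noteq> 0" and "u + v + w = 1"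
  shows "bary a b c (u *\<^sub>R a + v *\<^sub>R b + w *\<^sub>R c) = u"
proof -
  have w: "w = 1 - u - v" using assms(2) by simp
  have "cross2 (b - (u *\<^sub>R a + v *\<^sub>R b + w *\<^sub>R c)) (c - (u *\<^sub>R a + v *\<^sub>R b + w *\<^sub>R c))
      = u * cross2 (b - a) (c - a)"
    unfolding w by (simp add: cross2_def algebra_simps)
  then show ?thesis
    using assms(1) by (simp add: bary_def)
qed

lemma bary_homothety: "bary a b c (homothety m z x) = m * bary a b c x + (1 - m) * bary a b c z"
proof -
  have "cross2 (b - homothety m z x) (c - homothety m z x)
      = m * cross2 (b - x) (c - x) + (1 - m) * cross2 (b - z) (c - z)"
    by (simp add: homothety_def cross2_def algebra_simps)
  then show ?thesis
    by (simp add: bary_def add_divide_distrib)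
qed

lemma bary_sum:
  assumes "cross2 (b - a) (c - a) \<noteq> 0"
  shows "bary a b c x + bary b c a x + bary c a b x = 1"
proof -
  have "cross2 (b - x) (c - x) + cross2 (c - x) (a - x) + cross2 (a - x) (b - x) = cross2 (b - a) (c - a)"
    by (simp add: cross2_def algebra_simps)
  then show ?thesis
    using assms by (simp add: bary_def cross2_rotate add_divide_distrib [symmetric])
qed

lemma bary_decomposition:
  assumes D: "cross2 (b - a) (c - a) \<noteq> 0"
  shows "x = bary a b c x *\<^sub>R a + bary b c a x *\<^sub>R b + bary c a b x *\<^sub>R c"
proof -
  have "cross2 (c - x) (a - x) = cross2 (x - a) (c - a)" "cross2 (a - x) (b - x) = cross2 (b - a) (x - a)"
    by (simp_all add: cross2_def algebra_simps)
  then have lb: "bary b c a x = cross2 (x - a) (c - a) / cross2 (b - a) (c - a)"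
      and lc: "bary c a b x = cross2 (b - a) (x - a) / cross2 (b - a) (c - a)"
    by (simp_all add: bary_def cross2_rotate)
  have "x - a = (1 / cross2 (b - a) (c - a)) *\<^sub>R (cross2 (b - a) (c - a) *\<^sub>R (x - a))"
    using D by simp
  also have "\<dots> = bary b c a x *\<^sub>R (b - a) + bary c a b x *\<^sub>R (c - a)"
    unfolding cross2_cramer[of "b - a" "c - a" "x - a"] lb lc by (simp add: scaleR_add_right)
  finally have "x = a + bary b c a x *\<^sub>R (b - a) + bary c a b x *\<^sub>R (c - a)"
    by (simp add: algebra_simps)
  then have "x = (1 - bary b c a x - bary c a b x) *\<^sub>R a + bary b c a x *\<^sub>R b + bary c a b x *\<^sub>R c"
    by (simp add: algebra_simps)
  moreover have "1 - bary b c a x - bary c a b x = bary a b c x"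
    using bary_sum[OF D, of x] by simp
  ultimately show ?thesis
    by simp
qed

lemma cross2_neq_0_if_not_collinear:
  assumes "\<not> collinear {a, b, c}"
  shows "cross2 (b - a) (c - a) \<noteq> 0"
proof
  assume D: "cross2 (b - a) (c - a) = 0"
  define u w where "u = b - a" and "w = c - a"
  have "collinear {0, u, w}"
  proof (cases "u = 0")
    case False
    have "inner u u *\<^sub>R w = inner u w *\<^sub>R u + cross2 u w *\<^sub>R (\<chi> i. if i = 1 then - u$2 else u$1)"
      by (simp add: vec_eq_iff forall_2 inner_vec2 cross2_def algebra_simps)
    with D have uw: "inner u u *\<^sub>R w = inner u w *\<^sub>R u"
      by (simp add: u_def w_def)
    have "w = (1 / inner u u) *\<^sub>R (inner u u *\<^sub>R w)"
      using False by simp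
    also have "\<dots> = (inner u w / inner u u) *\<^sub>R u"
      unfolding uw by simp
    finally show ?thesis
      unfolding collinear_lemma by blast
  qed (simp add: collinear_lemma)
  moreover have "collinear {a, b, c} \<longleftrightarrow> collinear {0, u, w}"
    unfolding u_def w_def by (subst insert_commute) (simp add: collinear_3)
  ultimately show False
    using assms by simp
qed

lemma convex_hull_3_bary:
  assumes D: "cross2 (b - a) (c - a) \<noteq> 0"
  shows "convex hull {a, b, c} = {x. 0 \<le> bary a b c x \<and> 0 \<le> bary b c a x \<and> 0 \<le> bary c a b x}"
proof (intro set_eqI iffI)
  fix x
  assume "x \<in> convex hull {a, b, c}"
  then obtain u v w where uvw: "0 \<le> u" "0 \<le> v" "0 \<le> w" "u + v + w = 1"
    and x: "x = u *\<^sub>R a + v *\<^sub>R b + w *\<^sub>R c"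
    by (auto simp: convex_hull_3)
  have "x = v *\<^sub>R b + w *\<^sub>R c + u *\<^sub>R a" "x = w *\<^sub>R c + u *\<^sub>R a + v *\<^sub>R b"
    using x by (simp_all add: algebra_simps)
  moreover have "cross2 (c - b) (a - b) \<noteq> 0" "cross2 (a - c) (b - c) \<noteq> 0"
    using D by (simp_all add: cross2_rotate)
  ultimately have "bary a b c x = u" "bary b c a x = v" "bary c a b x = w"
    using uvw(4) x bary_convex_combination[OF D] bary_convex_combination[of c b a v w u]
      bary_convex_combination[of a c b w u v] by (simp_all add: ac_simps)
  with uvw show "x \<in> {x. 0 \<le> bary a b c x \<and> 0 \<le> bary b c a x \<and> 0 \<le> bary c a b x}"
    by simp
next
  fix x
  assume "x \<in> {x. 0 \<le> bary a b c x \<and> 0 \<le> bary b c a x \<and> 0 \<le> bary c a b x}"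
  then show "x \<in> convex hull {a, b, c}"
    unfolding convex_hull_3 using bary_decomposition[OF D, of x] bary_sum[OF D, of x] by blast
qed

lemma negligible_bary_level_set:
  assumes D: "cross2 (b - a) (c - a) \<noteq> 0" and "b \<noteq> c"
  shows "negligible {x. bary a b c x = r}"
proof -
  define \<gamma> :: "real^2" where "\<gamma> = (\<chi> i. if i = 1 then b$2 - c$2 else c$1 - b$1)"
  have "\<gamma> \<noteq> 0"
    using \<open>b \<noteq> c\<close> by (auto simp: \<gamma>_def vec_eq_iff forall_2)
  have "cross2 (b - x) (c - x) = cross2 b c + inner \<gamma> x" for x
    by (simp add: \<gamma>_def cross2_def inner_vec2 algebra_simps)
  then have "{x. bary a b c x = r} = {x. inner \<gamma> x = r * cross2 (b - a) (c - a) - cross2 b c}"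
    using D by (auto simp: bary_def field_simps)
  with \<open>\<gamma> \<noteq> 0\<close> show ?thesis
    by (simp add: negligible_hyperplane)
qed

section \<open>Integrals of quadratic functions over a triangle\<close>

lemma image_homothety:
  assumes "m \<noteq> 0"
  shows "homothety m z ` S = {x. homothety (1 / m) z x \<in> S}"
proof (intro set_eqI iffI)
  fix x
  assume "x \<in> homothety m z ` S"
  then obtain y where "y \<in> S" "x = homothety m z y"
    by blast
  then show "x \<in> {x. homothety (1 / m) z x \<in> S}"
    by (simp add: homothety_inverse[OF assms])
next
  fix x
  assume "x \<in> {x. homothety (1 / m) z x \<in> S}"
  moreover have "homothety m z (homothety (1 / m) z x) = x"
    using homothety_inverse[of "1 / m" z x] assms by simp
  ultimately show "x \<in> homothety m z ` S"
    by (metis image_eqI mem_Collect_eq)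
qed

lemma bary_vertices:
  assumes "cross2 (b - a) (c - a) \<noteq> 0"
  shows "bary a b c a = 1" "bary a b c b = 0" "bary a b c c = 0"
  using assms by (simp_all add: bary_def cross2_def)

lemma bary_centroid:
  assumes "cross2 (b - a) (c - a) \<noteq> 0"
  shows "bary a b c ((1 / 3) *\<^sub>R (a + b + c)) = 1 / 3"
  using bary_convex_combination[OF assms, of "1 / 3" "1 / 3" "1 / 3"] by (simp add: scaleR_add_right)

lemma homothety_vertex_image_triangle:
  assumes D: "cross2 (b - a) (c - a) \<noteq> 0"
  shows "homothety (1 / 2) a ` (convex hull {a, b, c}) = {x \<in> convex hull {a, b, c}. 1 / 2 \<le> bary a b c x}"
proof -
  have "cross2 (c - b) (a - b) \<noteq> 0" "cross2 (a - c) (b - c) \<noteq> 0"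
    using D by (simp_all add: cross2_rotate)
  then have "bary b c a a = 0" "bary c a b a = 0"
    using bary_vertices by blast+
  then show ?thesis
    using D by (auto simp: image_homothety convex_hull_3_bary bary_homothety bary_vertices)
qed

lemma homothety_centroid_image_triangle:
  assumes D: "cross2 (b - a) (c - a) \<noteq> 0"
  shows "homothety (- 1 / 2) ((1 / 3) *\<^sub>R (a + b + c)) ` (convex hull {a, b, c})
    = {x. bary a b c x \<le> 1 / 2 \<and> bary b c a x \<le> 1 / 2 \<and> bary c a b x \<le> 1 / 2}"
proof -
  have "cross2 (c - b) (a - b) \<noteq> 0" "cross2 (a - c) (b - c) \<noteq> 0"
    using D by (simp_all add: cross2_rotate)
  moreover have "(1 / 3) *\<^sub>R (a + b + c) = (1 / 3) *\<^sub>R (b + c + a)" "(1 / 3) *\<^sub>R (a + b + c) = (1 / 3) *\<^sub>R (c + a + b)"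
    by (simp_all add: ac_simps)
  ultimately have "bary b c a ((1 / 3) *\<^sub>R (a + b + c)) = 1 / 3" "bary c a b ((1 / 3) *\<^sub>R (a + b + c)) = 1 / 3"
    using bary_centroid by metis+
  then show ?thesis
    using D by (auto simp: image_homothety convex_hull_3_bary bary_homothety bary_centroid)
qed

lemma integrable_continuous_compact:
  fixes f :: "'a::euclidean_space \<Rightarrow> real"
  assumes "compact S" "continuous_on S f"
  shows "f integrable_on S"
proof -
  have "(\<lambda>x. indicator S x *\<^sub>R f x) integrable_on UNIV"
    using borel_integrable_compact[OF assms] has_integral_integral_lborel by blast
  moreover have "(\<lambda>x. indicator S x *\<^sub>R f x) = (\<lambda>x. if x \<in> S then f x else 0)"
    by (auto simp: indicator_def)
  ultimately show ?thesis
    by (metis integrable_restrict_UNIV)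
qed

lemma has_integral_homothety:
  fixes f :: "'a::euclidean_space \<Rightarrow> 'b::banach"
  assumes f: "(f has_integral i) (homothety m z ` S)" and bounded: "bounded (homothety m z ` S)"
    and m: "m \<noteq> 0"
  shows "((\<lambda>x. f (homothety m z x)) has_integral i /\<^sub>R \<bar>m\<bar> ^ DIM('a)) S"
proof -
  obtain r where r: "homothety m z ` S \<subseteq> cbox (- r) r"
    using bounded_subset_cbox_symmetric[OF bounded] by blast
  define g where "g = (\<lambda>x. if x \<in> homothety m z ` S then f x else 0)"
  have "(g has_integral i) (cbox (- r) r)"
    using f r by (simp add: g_def)
  from has_integral_affinity[OF this m, of "(1 - m) *\<^sub>R z"]
  have "((\<lambda>x. g (homothety m z x)) has_integral i /\<^sub>R \<bar>m\<bar> ^ DIM('a)) (homothety (1 / m) z ` cbox (- r) r)"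
    using m by (simp add: homothety_def divide_inverse_commute algebra_simps)
  moreover have "g (homothety m z x) = (if x \<in> S then f (homothety m z x) else 0)" for x
    using homothety_inverse[OF m, of z] by (auto simp: g_def) (metis image_eqI)
  moreover have "S \<subseteq> homothety (1 / m) z ` cbox (- r) r"
  proof
    fix x
    assume "x \<in> S"
    then have "homothety m z x \<in> cbox (- r) r"
      using r by blast
    then show "x \<in> homothety (1 / m) z ` cbox (- r) r"
      using homothety_inverse[OF m, of z x] by (metis image_eqI)
  qed
  ultimately show ?thesis
    by simp
qed

lemma integral_homothety:
  fixes f :: "'a::euclidean_space \<Rightarrow> real"
  assumes S: "compact S" and f: "continuous_on UNIV f" and m: "m \<noteq> 0"
  shows "integral S (\<lambda>x. f (homothety m z x)) = integral (homothety m z ` S) f / \<bar>m\<bar> ^ DIM('a)"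
proof -
  have "compact (homothety m z ` S)"
    using S by (intro compact_continuous_image) (auto simp: homothety_def intro!: continuous_intros)
  then have "(f has_integral integral (homothety m z ` S) f) (homothety m z ` S)"
    using f by (intro integrable_integral integrable_continuous_compact continuous_on_subset[OF f]) auto
  from has_integral_homothety[OF this _ m] \<open>compact (homothety m z ` S)\<close> show ?thesis
    by (simp add: compact_imp_bounded integral_unique divide_inverse_commute)
qed

lemma has_integral_triangle_pieces:
  fixes f :: "real^2 \<Rightarrow> real"
  assumes nc: "\<not> collinear {a, b, c}"
  defines "T \<equiv> convex hull {a, b, c}"
  assumes "(f has_integral i\<^sub>a) {x \<in> T. 1 / 2 \<le> bary a b c x}"
    and "(f has_integral i\<^sub>b) {x \<in> T. 1 / 2 \<le> bary b c a x}"
    and "(f has_integral i\<^sub>c) {x \<in> T. 1 / 2 \<le> bary c a b x}"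
    and "(f has_integral i\<^sub>0) {x. bary a b c x \<le> 1 / 2 \<and> bary b c a x \<le> 1 / 2 \<and> bary c a b x \<le> 1 / 2}"
  shows "(f has_integral (i\<^sub>a + i\<^sub>b + i\<^sub>c + i\<^sub>0)) T"
proof -
  have D: "cross2 (b - a) (c - a) \<noteq> 0" "cross2 (c - b) (a - b) \<noteq> 0" "cross2 (a - c) (b - c) \<noteq> 0"
    using cross2_neq_0_if_not_collinear[OF nc] by (simp_all add: cross2_rotate)
  have "a \<noteq> b" "b \<noteq> c" "c \<noteq> a"
    using nc by (auto simp: collinear_2 insert_commute)
  define H where "H = {x. bary a b c x = 1 / 2} \<union> {x. bary b c a x = 1 / 2} \<union> {x. bary c a b x = 1 / 2}"
  have H: "negligible H"
    unfolding H_def using D \<open>a \<noteq> b\<close> \<open>b \<noteq> c\<close> \<open>c \<noteq> a\<close> by (intro negligible_Un negligible_bary_level_set)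
  have sum: "bary a b c x + bary b c a x + bary c a b x = 1" for x
    using bary_sum[OF D(1)] .
  have T: "T = {x. 0 \<le> bary a b c x \<and> 0 \<le> bary b c a x \<and> 0 \<le> bary c a b x}"
    unfolding T_def using convex_hull_3_bary[OF D(1)] .
  define P\<^sub>a P\<^sub>b P\<^sub>c P\<^sub>0 where "P\<^sub>a = {x \<in> T. 1 / 2 \<le> bary a b c x}" and "P\<^sub>b = {x \<in> T. 1 / 2 \<le> bary b c a x}"
    and "P\<^sub>c = {x \<in> T. 1 / 2 \<le> bary c a b x}"
    and "P\<^sub>0 = {x. bary a b c x \<le> 1 / 2 \<and> bary b c a x \<le> 1 / 2 \<and> bary c a b x \<le> 1 / 2}"
  have "negligible (P\<^sub>a \<inter> P\<^sub>b)" "negligible ((P\<^sub>a \<union> P\<^sub>b) \<inter> P\<^sub>c)" "negligible ((P\<^sub>a \<union> P\<^sub>b \<union> P\<^sub>c) \<inter> P\<^sub>0)"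
    by (intro negligible_subset[OF H]; auto simp: H_def T P\<^sub>a_def P\<^sub>b_def P\<^sub>c_def P\<^sub>0_def sum; smt (verit) sum)+
  then have "(f has_integral (i\<^sub>a + i\<^sub>b + i\<^sub>c + i\<^sub>0)) (P\<^sub>a \<union> P\<^sub>b \<union> P\<^sub>c \<union> P\<^sub>0)"
    using assms(3-6) unfolding P\<^sub>a_def P\<^sub>b_def P\<^sub>c_def P\<^sub>0_def by (intro has_integral_Un)
  moreover have "P\<^sub>a \<union> P\<^sub>b \<union> P\<^sub>c \<union> P\<^sub>0 = T"
    unfolding P\<^sub>a_def P\<^sub>b_def P\<^sub>c_def P\<^sub>0_def T using sum by (auto; smt (verit) sum)
  ultimately show ?thesis
    by simp
qed

text \<open>The four homotheties of ratio 1/2 at the vertices and -1/2 at the centroid map T onto the four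
  triangles into which the midpoints of the edges cut T.\<close>

lemma integral_triangle_self_similar:
  fixes f :: "real^2 \<Rightarrow> real"
  assumes nc: "\<not> collinear {a, b, c}" and f: "continuous_on UNIV f"
  defines "T \<equiv> convex hull {a, b, c}" and "g \<equiv> (1 / 3) *\<^sub>R (a + b + c)"
  shows "integral T f = (integral T (\<lambda>x. f (homothety (1 / 2) a x))
      + integral T (\<lambda>x. f (homothety (1 / 2) b x)) + integral T (\<lambda>x. f (homothety (1 / 2) c x))
      + integral T (\<lambda>x. f (homothety (- 1 / 2) g x))) / 4"
proof -
  have D: "cross2 (b - a) (c - a) \<noteq> 0" "cross2 (c - b) (a - b) \<noteq> 0" "cross2 (a - c) (b - c) \<noteq> 0"
    using cross2_neq_0_if_not_collinear[OF nc] by (simp_all add: cross2_rotate)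
  have compact: "compact T"
    by (simp add: T_def finite_imp_compact_convex_hull)
  have scaled: "integral T (\<lambda>x. f (homothety m z x)) = 4 * integral (homothety m z ` T) f"
    if "\<bar>m\<bar> = 1 / 2" for m z
    using integral_homothety[OF compact f, of m z] that by (simp add: power2_eq_square)
  have "compact (homothety m z ` T)" for m z
    using compact by (intro compact_continuous_image) (auto simp: homothety_def intro!: continuous_intros)
  then have piece: "(f has_integral integral (homothety m z ` T) f) (homothety m z ` T)" for m z
    by (intro integrable_integral integrable_continuous_compact continuous_on_subset[OF f]) auto
  have "(f has_integral (integral (homothety (1 / 2) a ` T) f + integral (homothety (1 / 2) b ` T) f
      + integral (homothety (1 / 2) c ` T) f + integral (homothety (- 1 / 2) g ` T) f)) T"
    unfolding T_def
    using piece[of "1 / 2" a] piece[of "1 / 2" b] piece[of "1 / 2" c] piece[of "- 1 / 2" g]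
      homothety_vertex_image_triangle[OF D(1)] homothety_vertex_image_triangle[OF D(2)]
      homothety_vertex_image_triangle[OF D(3)] homothety_centroid_image_triangle[OF D(1)]
    by (intro has_integral_triangle_pieces[OF nc]) (simp_all add: T_def g_def insert_commute ac_simps)
  then show ?thesis
    by (simp add: scaled integral_unique)
qed

lemma integral_quadratic_inner:
  fixes \<gamma> :: "'a::euclidean_space" and r\<^sub>2 r\<^sub>1 r\<^sub>0 :: real
  assumes "compact S"
  shows "integral S (\<lambda>x. r\<^sub>2 * (inner \<gamma> x)\<^sup>2 + r\<^sub>1 * inner \<gamma> x + r\<^sub>0)
    = r\<^sub>2 * integral S (\<lambda>x. (inner \<gamma> x)\<^sup>2) + r\<^sub>1 * integral S (\<lambda>x. inner \<gamma> x) + r\<^sub>0 * integral S (\<lambda>x. 1)"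
proof -
  have "(\<lambda>x. (inner \<gamma> x)\<^sup>2) integrable_on S" "(\<lambda>x. inner \<gamma> x) integrable_on S" "(\<lambda>x. 1 :: real) integrable_on S"
    using assms by (auto intro!: integrable_continuous_compact continuous_intros)
  then have "((\<lambda>x. r\<^sub>2 * (inner \<gamma> x)\<^sup>2 + r\<^sub>1 * inner \<gamma> x + r\<^sub>0 * 1) has_integral
      r\<^sub>2 * integral S (\<lambda>x. (inner \<gamma> x)\<^sup>2) + r\<^sub>1 * integral S (\<lambda>x. inner \<gamma> x) + r\<^sub>0 * integral S (\<lambda>x. 1)) S"
    by (intro has_integral_add has_integral_mult_right integrable_integral)
  then show ?thesis
    by (simp add: integral_unique)
qed

lemma integral_affine_square_triangle:
  fixes a b c \<gamma> :: "real^2"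
  assumes nc: "\<not> collinear {a, b, c}"
  defines "T \<equiv> convex hull {a, b, c}"
  shows "integral T (\<lambda>x. (inner \<gamma> x + k)\<^sup>2) = integral T (\<lambda>x. 1) / 12 *
    ((inner \<gamma> a + k)\<^sup>2 + (inner \<gamma> b + k)\<^sup>2 + (inner \<gamma> c + k)\<^sup>2 + (inner \<gamma> a + inner \<gamma> b + inner \<gamma> c + 3 * k)\<^sup>2)"
proof -
  define I\<^sub>0 I\<^sub>1 I\<^sub>2 where "I\<^sub>0 = integral T (\<lambda>x. 1 :: real)" and "I\<^sub>1 = integral T (\<lambda>x. inner \<gamma> x)"
    and "I\<^sub>2 = integral T (\<lambda>x. (inner \<gamma> x)\<^sup>2)"
  have quadratic: "integral T (\<lambda>x. r\<^sub>2 * (inner \<gamma> x)\<^sup>2 + r\<^sub>1 * inner \<gamma> x + r\<^sub>0) = r\<^sub>2 * I\<^sub>2 + r\<^sub>1 * I\<^sub>1 + r\<^sub>0 * I\<^sub>0"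
    for r\<^sub>2 r\<^sub>1 r\<^sub>0
    unfolding I\<^sub>0_def I\<^sub>1_def I\<^sub>2_def T_def by (simp add: integral_quadratic_inner finite_imp_compact_convex_hull)
  have inner_homothety: "inner \<gamma> (homothety m z x) = m * inner \<gamma> x + (1 - m) * inner \<gamma> z" for m z x
    by (simp add: homothety_def inner_add_right)
  have centroid: "inner \<gamma> ((1 / 3) *\<^sub>R (a + b + c)) = (inner \<gamma> a + inner \<gamma> b + inner \<gamma> c) / 3"
    by (simp add: inner_add_right)
  have first: "integral T (\<lambda>x. inner \<gamma> (homothety m z x)) = m * I\<^sub>1 + (1 - m) * inner \<gamma> z * I\<^sub>0" for m z
    using quadratic[of 0 m "(1 - m) * inner \<gamma> z"] by (simp add: inner_homothety)
  have "continuous_on UNIV (\<lambda>x. inner \<gamma> x)" "continuous_on UNIV (\<lambda>x. (inner \<gamma> x)\<^sup>2)"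
    by (intro continuous_intros)+
  note self_similar = this[THEN integral_triangle_self_similar[OF nc], folded T_def]
  have I\<^sub>1: "I\<^sub>1 = I\<^sub>0 * (inner \<gamma> a + inner \<gamma> b + inner \<gamma> c) / 3"
    using self_similar(1) unfolding I\<^sub>1_def[symmetric] first centroid by (simp add: field_simps)
  have second: "integral T (\<lambda>x. (inner \<gamma> (homothety m z x))\<^sup>2)
      = m\<^sup>2 * I\<^sub>2 + 2 * m * (1 - m) * inner \<gamma> z * I\<^sub>1 + ((1 - m) * inner \<gamma> z)\<^sup>2 * I\<^sub>0" for m z
    using quadratic[of "m\<^sup>2" "2 * m * (1 - m) * inner \<gamma> z" "((1 - m) * inner \<gamma> z)\<^sup>2"]
    by (simp add: inner_homothety power2_eq_square algebra_simps)
  have I\<^sub>2: "I\<^sub>2 = I\<^sub>0 * ((inner \<gamma> a)\<^sup>2 + (inner \<gamma> b)\<^sup>2 + (inner \<gamma> c)\<^sup>2 + (inner \<gamma> a + inner \<gamma> b + inner \<gamma> c)\<^sup>2) / 12"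
    using self_similar(2) unfolding I\<^sub>2_def[symmetric] second centroid I\<^sub>1
    by (simp add: power2_eq_square field_simps)
  have "integral T (\<lambda>x. (inner \<gamma> x + k)\<^sup>2) = I\<^sub>2 + 2 * k * I\<^sub>1 + k\<^sup>2 * I\<^sub>0"
    using quadratic[of 1 "2 * k" "k\<^sup>2"] by (simp add: power2_eq_square algebra_simps)
  then show ?thesis
    unfolding I\<^sub>0_def[symmetric] I\<^sub>1 I\<^sub>2 by (simp add: power2_eq_square field_simps)
qed

lemma integral_affine_square_triangle_ge:
  fixes a b c \<gamma> :: "real^2"
  assumes nc: "\<not> collinear {a, b, c}"
  defines "T \<equiv> convex hull {a, b, c}"
  shows "integral T (\<lambda>x. 1) / 36 * ((inner \<gamma> (b - a))\<^sup>2 + (inner \<gamma> (c - b))\<^sup>2 + (inner \<gamma> (a - c))\<^sup>2)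
    \<le> integral T (\<lambda>x. (inner \<gamma> x + k)\<^sup>2)"
proof -
  define u v w where "u = inner \<gamma> a + k" and "v = inner \<gamma> b + k" and "w = inner \<gamma> c + k"
  have "0 \<le> integral T (\<lambda>x. 1 :: real)"
    by (intro integral_nonneg integrable_continuous_compact)
      (auto simp: T_def finite_imp_compact_convex_hull intro: continuous_intros)
  moreover have "u\<^sup>2 + v\<^sup>2 + w\<^sup>2 + (u + v + w)\<^sup>2 = ((v - u)\<^sup>2 + (w - v)\<^sup>2 + (u - w)\<^sup>2) / 3 + 4 / 3 * (u + v + w)\<^sup>2"
    by (simp add: power2_eq_square field_simps)
  then have "((v - u)\<^sup>2 + (w - v)\<^sup>2 + (u - w)\<^sup>2) / 3 \<le> u\<^sup>2 + v\<^sup>2 + w\<^sup>2 + (u + v + w)\<^sup>2"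
    by simp
  ultimately have "integral T (\<lambda>x. 1) / 12 * (((v - u)\<^sup>2 + (w - v)\<^sup>2 + (u - w)\<^sup>2) / 3)
      \<le> integral T (\<lambda>x. 1) / 12 * (u\<^sup>2 + v\<^sup>2 + w\<^sup>2 + (u + v + w)\<^sup>2)"
    by (intro mult_left_mono) auto
  moreover have "v - u = inner \<gamma> (b - a)" "w - v = inner \<gamma> (c - b)" "u - w = inner \<gamma> (a - c)"
    by (simp_all add: u_def v_def w_def inner_diff_right)
  ultimately show ?thesis
    using integral_affine_square_triangle[OF nc, of \<gamma> k]
    by (simp add: T_def u_def v_def w_def algebra_simps)
qed

section \<open>Minimum angle, edge differences and the gradient\<close>

lemma binary_quadratic_form_nonneg:
  fixes \<alpha> \<beta> \<delta> p q :: real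
  assumes "0 \<le> \<alpha>" "0 \<le> \<delta>" "\<beta>\<^sup>2 \<le> \<alpha> * \<delta>"
  shows "0 \<le> \<alpha> * p\<^sup>2 + 2 * \<beta> * p * q + \<delta> * q\<^sup>2"
proof (cases "\<alpha> = 0")
  case True
  with assms show ?thesis
    by simp
next
  case False
  with assms have "\<alpha> > 0"
    by simp
  have "\<alpha> * (\<alpha> * p\<^sup>2 + 2 * \<beta> * p * q + \<delta> * q\<^sup>2) = (\<alpha> * p + \<beta> * q)\<^sup>2 + (\<alpha> * \<delta> - \<beta>\<^sup>2) * q\<^sup>2"
    by (simp add: power2_eq_square algebra_simps)
  also have "\<dots> \<ge> 0"
    using assms by simp
  finally show ?thesis
    using \<open>\<alpha> > 0\<close> by (simp add: zero_le_mult_iff)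
qed

lemma edge_form_determinant_nonneg:
  fixes x y t :: real
  assumes t: "0 \<le> t" "t \<le> 3" and x: "1 / 2 \<le> x"
    and angle: "t * x\<^sup>2 \<le> y\<^sup>2" and length: "x\<^sup>2 + y\<^sup>2 \<le> 1"
  shows "4 * y\<^sup>2 * (3 - t) - t * (3 + (2 * x - 1)\<^sup>2) + t\<^sup>2 \<ge> 0"
proof -
  define u where "u = 2 * x - 1"
  have u: "0 \<le> u" "(1 + u)\<^sup>2 = 4 * x\<^sup>2"
    using x by (simp_all add: u_def power2_eq_square algebra_simps)
  have "(1 + u)\<^sup>2 * (1 + t) \<le> 4"
    using angle length u(2) by (simp add: algebra_simps)
  then have "(3 - t) * (1 + u)\<^sup>2 \<ge> 4 * u * (2 + u)"
    by (simp add: power2_eq_square algebra_simps)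
  then have "(3 - t) * (1 + u)\<^sup>2 * (2 + u) \<ge> 4 * u * (2 + u) * (2 + u)"
    using u(1) by (simp add: mult_right_mono)
  moreover have "(1 + u)\<^sup>2 \<le> 4 * (2 + u) * (2 + u)"
    using u(1) by (simp add: power2_eq_square algebra_simps)
  then have "u * (1 + u)\<^sup>2 \<le> u * (4 * (2 + u) * (2 + u))"
    using u(1) by (rule mult_left_mono)
  ultimately have "(3 - t) * (2 + u) * (1 + u)\<^sup>2 \<ge> u * (1 + u)\<^sup>2"
    by (simp add: algebra_simps)
  then have "(3 - t) * (2 + u) \<ge> u"
    using u(1) by (simp add: mult_le_cancel_right_pos)
  then have "u * ((3 - t) * (2 + u) - u) \<ge> 0"
    using u(1) by simp
  moreover have "u * ((3 - t) * (2 + u) - u) = (3 - t) * (1 + u)\<^sup>2 - 3 - u\<^sup>2 + t"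
    by (simp add: power2_eq_square algebra_simps)
  ultimately have key: "(3 - t) * (1 + u)\<^sup>2 - 3 - u\<^sup>2 + t \<ge> 0"
    by simp
  have "4 * y\<^sup>2 * (3 - t) \<ge> t * (1 + u)\<^sup>2 * (3 - t)"
    using angle t u(2) by (intro mult_right_mono) auto
  moreover have "t * (1 + u)\<^sup>2 * (3 - t) - t * (3 + u\<^sup>2) + t\<^sup>2 = t * ((3 - t) * (1 + u)\<^sup>2 - 3 - u\<^sup>2 + t)"
    by (simp add: power2_eq_square algebra_simps)
  moreover have "\<dots> \<ge> 0"
    using key t by simp
  ultimately show ?thesis
    unfolding u_def by linarith
qed

text \<open>The triangle with vertices 0, (1,0), (x,y), whose angles at 0 and (1,0) have squared tangent at
  least t, and the linear function with gradient (p,q): the right-hand side is twice the sum of its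
  squared differences along the three edges.\<close>

lemma normalized_edge_derivatives_bound:
  fixes x y t p q :: real
  assumes t: "0 \<le> t" "t \<le> 3"
    and angles: "t * x\<^sup>2 \<le> y\<^sup>2" "t * (1 - x)\<^sup>2 \<le> y\<^sup>2"
    and lengths: "x\<^sup>2 + y\<^sup>2 \<le> 1" "(1 - x)\<^sup>2 + y\<^sup>2 \<le> 1"
  shows "t * (p\<^sup>2 + q\<^sup>2) \<le> 2 * (p\<^sup>2 + (p * x + q * y)\<^sup>2 + (p * (x - 1) + q * y)\<^sup>2)"
proof -
  define \<alpha> \<beta> \<delta> where "\<alpha> = 2 * (1 + x\<^sup>2 + (x - 1)\<^sup>2) - t" and "\<beta> = 2 * y * (2 * x - 1)"
    and "\<delta> = 4 * y\<^sup>2 - t"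
  have "x\<^sup>2 + (x - 1)\<^sup>2 = 1 / 2 + 2 * (x - 1 / 2)\<^sup>2"
    by (simp add: power2_eq_square algebra_simps)
  then have half: "1 / 2 \<le> x\<^sup>2 + (1 - x)\<^sup>2"
    by (simp add: power2_commute)
  then have "0 \<le> \<alpha>"
    using t by (simp add: \<alpha>_def power2_commute)
  moreover have "t * (1 / 2) \<le> t * (x\<^sup>2 + (1 - x)\<^sup>2)"
    using half t by (intro mult_left_mono)
  then have "0 \<le> \<delta>"
    using angles by (simp add: \<delta>_def algebra_simps)
  moreover have "\<beta>\<^sup>2 \<le> \<alpha> * \<delta>"
  proof (cases "1 / 2 \<le> x")
    case True
    from edge_form_determinant_nonneg[OF t True angles(1) lengths(1)] show ?thesis
      by (simp add: \<alpha>_def \<beta>_def \<delta>_def power2_eq_square algebra_simps)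
  next
    case False
    then have "1 / 2 \<le> 1 - x"
      by simp
    from edge_form_determinant_nonneg[OF t this angles(2) lengths(2)] show ?thesis
      by (simp add: \<alpha>_def \<beta>_def \<delta>_def power2_eq_square algebra_simps)
  qed
  ultimately have "0 \<le> \<alpha> * p\<^sup>2 + 2 * \<beta> * p * q + \<delta> * q\<^sup>2"
    by (rule binary_quadratic_form_nonneg)
  also have "\<dots> = 2 * (p\<^sup>2 + (p * x + q * y)\<^sup>2 + (p * (x - 1) + q * y)\<^sup>2) - t * (p\<^sup>2 + q\<^sup>2)"
    by (simp add: \<alpha>_def \<beta>_def \<delta>_def power2_eq_square algebra_simps)
  finally show ?thesis
    by simp
qed

lemma inner_le_cos_if_tri_angle_ge:
  fixes a b c :: "real^2"
  assumes "b \<noteq> a" "c \<noteq> a" "0 \<le> \<omega>" "\<omega> \<le> pi" "\<omega> \<le> tri_angle a b c"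
  shows "inner (b - a) (c - a) \<le> cos \<omega> * (norm (b - a) * norm (c - a))"
proof -
  define r where "r = inner (b - a) (c - a) / (norm (b - a) * norm (c - a))"
  have norms: "norm (b - a) * norm (c - a) > 0"
    using assms(1,2) by simp
  have "\<bar>inner (b - a) (c - a)\<bar> \<le> norm (b - a) * norm (c - a)"
    by (rule Cauchy_Schwarz_ineq2)
  then have r: "- 1 \<le> r" "r \<le> 1"
    unfolding r_def using norms by (auto simp: abs_le_iff divide_le_eq le_divide_eq)
  have "cos (arccos r) \<le> cos \<omega>"
    using assms(3-5) r unfolding tri_angle_def r_def [symmetric]
    by (intro cos_monotone_0_pi_le) (auto intro: arccos_ubound)
  then have "r \<le> cos \<omega>"
    using r by (simp add: cos_arccos)
  then show ?thesis
    unfolding r_def using norms by (simp add: divide_le_eq mult.commute)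
qed

lemma tan_sq_mult_inner_sq_le:
  fixes a b c :: "real^2"
  assumes "b \<noteq> a" "c \<noteq> a" "0 \<le> \<omega>" "\<omega> < pi / 2" "\<omega> \<le> tri_angle a b c"
    and acute: "0 \<le> inner (b - a) (c - a)"
  shows "(tan \<omega>)\<^sup>2 * (inner (b - a) (c - a))\<^sup>2 \<le> (cross2 (b - a) (c - a))\<^sup>2"
proof -
  have "cos \<omega> > 0"
    using assms(3,4) by (intro cos_gt_zero_pi) auto
  have "inner (b - a) (c - a) \<le> cos \<omega> * (norm (b - a) * norm (c - a))"
    using assms(1-3,5) assms(4) by (intro inner_le_cos_if_tri_angle_ge) auto
  then have "(inner (b - a) (c - a))\<^sup>2 \<le> (cos \<omega> * (norm (b - a) * norm (c - a)))\<^sup>2"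
    using acute by (rule power_mono)
  also have "\<dots> = (cos \<omega>)\<^sup>2 * ((inner (b - a) (c - a))\<^sup>2 + (cross2 (b - a) (c - a))\<^sup>2)"
    by (simp add: power_mult_distrib inner_square_add_cross2_square power2_norm_eq_inner)
  finally have "(sin \<omega>)\<^sup>2 * (inner (b - a) (c - a))\<^sup>2 \<le> (cos \<omega>)\<^sup>2 * (cross2 (b - a) (c - a))\<^sup>2"
    by (simp add: sin_squared_eq algebra_simps)
  then have "(sin \<omega>)\<^sup>2 * (inner (b - a) (c - a))\<^sup>2 / (cos \<omega>)\<^sup>2 \<le> (cross2 (b - a) (c - a))\<^sup>2"
    using \<open>cos \<omega> > 0\<close> by (simp add: divide_le_eq mult.commute)
  then show ?thesis
    by (simp add: tan_def power_divide)
qed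

lemma tan_sq_le_three:
  assumes "0 \<le> \<omega>" "\<omega> \<le> pi / 3"
  shows "(tan \<omega>)\<^sup>2 \<le> 3"
proof -
  have "0 \<le> tan \<omega>"
    using assms pi_gt_zero by (intro tan_pos_pi2_le) linarith+
  moreover have "tan \<omega> \<le> sqrt 3"
    using assms pi_gt_zero tan_mono_le[of \<omega> "pi / 3"] by (simp add: tan_60)
  ultimately show ?thesis
    using power_mono[of "tan \<omega>" "sqrt 3" 2] by simp
qed

text \<open>x and y are the coordinates of c - a in the orthogonal frame formed by b - a and its rotation
  by a right angle, in units of the longest edge b - a.\<close>

lemma longest_edge_normalized_coordinates:
  fixes a b c :: "real^2"
  assumes nc: "\<not> collinear {a, b, c}" and \<omega>: "0 \<le> \<omega>" "\<omega> \<le> pi / 3"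
    and angles: "\<omega> \<le> tri_angle a b c" "\<omega> \<le> tri_angle b c a"
    and longest: "norm (c - a) \<le> norm (b - a)" "norm (c - b) \<le> norm (b - a)"
  defines "E \<equiv> inner (b - a) (b - a)"
  defines "x \<equiv> inner (b - a) (c - a) / E" and "y \<equiv> cross2 (b - a) (c - a) / E"
  shows "(tan \<omega>)\<^sup>2 * x\<^sup>2 \<le> y\<^sup>2" "(tan \<omega>)\<^sup>2 * (1 - x)\<^sup>2 \<le> y\<^sup>2"
    and "x\<^sup>2 + y\<^sup>2 \<le> 1" "(1 - x)\<^sup>2 + y\<^sup>2 \<le> 1"
proof -
  define e f where "e = b - a" and "f = c - a"
  define X Y where "X = inner e f" and "Y = cross2 e f"
  have "a \<noteq> b" "b \<noteq> c" "c \<noteq> a"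
    using nc by (auto simp: collinear_2 insert_commute)
  then have "E > 0"
    by (simp add: E_def)
  have sides: "inner f f \<le> E" "inner (f - e) (f - e) \<le> E"
    using longest by (simp_all add: E_def e_def f_def power2_norm_eq_inner [symmetric] power_mono)
  moreover have "inner (f - e) (f - e) = inner f f - 2 * X + E"
    by (simp add: X_def E_def e_def inner_diff_left inner_diff_right inner_commute)
  ultimately have "0 \<le> X" "X \<le> E"
    using inner_ge_zero[of f] inner_ge_zero[of "f - e"] by linarith+
  have "inner e (f - e) = - (E - X)" "cross2 e (f - e) = Y"
    by (simp_all add: E_def e_def X_def Y_def inner_diff_right cross2_def algebra_simps)
  then have "X\<^sup>2 + Y\<^sup>2 = E * inner f f" "(E - X)\<^sup>2 + Y\<^sup>2 = E * inner (f - e) (f - e)"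
    using inner_square_add_cross2_square[of e f] inner_square_add_cross2_square[of e "f - e"]
    by (simp_all add: E_def e_def X_def Y_def power2_commute)
  with sides \<open>E > 0\<close> have lengths: "X\<^sup>2 + Y\<^sup>2 \<le> E\<^sup>2" "(E - X)\<^sup>2 + Y\<^sup>2 \<le> E\<^sup>2"
    by (simp_all add: power2_eq_square)
  have "(tan \<omega>)\<^sup>2 * X\<^sup>2 \<le> Y\<^sup>2"
    using tan_sq_mult_inner_sq_le[of b a c \<omega>] \<open>0 \<le> X\<close> \<open>a \<noteq> b\<close> \<open>c \<noteq> a\<close> \<omega> angles(1) pi_gt_zero
    by (simp add: X_def Y_def e_def f_def)
  moreover have "inner (c - b) (a - b) = E - X" "cross2 (c - b) (a - b) = Y"
    by (simp_all add: E_def X_def Y_def e_def f_def cross2_rotate inner_diff_left inner_diff_right inner_commute)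
  then have "(tan \<omega>)\<^sup>2 * (E - X)\<^sup>2 \<le> Y\<^sup>2"
    using tan_sq_mult_inner_sq_le[of c b a \<omega>] \<open>X \<le> E\<close> \<open>a \<noteq> b\<close> \<open>b \<noteq> c\<close> \<omega> angles(2) pi_gt_zero
    by simp
  moreover have xy: "x = X / E" "1 - x = (E - X) / E" "y = Y / E"
    using \<open>E > 0\<close> by (simp_all add: x_def y_def X_def Y_def e_def f_def field_simps)
  ultimately show "(tan \<omega>)\<^sup>2 * x\<^sup>2 \<le> y\<^sup>2" "(tan \<omega>)\<^sup>2 * (1 - x)\<^sup>2 \<le> y\<^sup>2"
    by (auto simp: power_divide intro!: divide_right_mono)
  show "x\<^sup>2 + y\<^sup>2 \<le> 1" "(1 - x)\<^sup>2 + y\<^sup>2 \<le> 1"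
    using lengths \<open>E > 0\<close> unfolding xy(2) unfolding xy(1,3)
    by (simp_all add: power_divide add_divide_distrib [symmetric] divide_le_eq)
qed

lemma longest_edge_gradient_bound:
  fixes a b c \<beta> :: "real^2"
  assumes nc: "\<not> collinear {a, b, c}" and \<omega>: "0 \<le> \<omega>" "\<omega> \<le> pi / 3"
    and angles: "\<omega> \<le> tri_angle a b c" "\<omega> \<le> tri_angle b c a"
    and longest: "norm (c - a) \<le> norm (b - a)" "norm (c - b) \<le> norm (b - a)"
  shows "(tan \<omega>)\<^sup>2 * (norm (b - a))\<^sup>2 * (norm \<beta>)\<^sup>2
    \<le> 2 * ((inner \<beta> (b - a))\<^sup>2 + (inner \<beta> (c - b))\<^sup>2 + (inner \<beta> (a - c))\<^sup>2)"
proof -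
  define e f where "e = b - a" and "f = c - a"
  define E x y where "E = inner e e" and "x = inner e f / E" and "y = cross2 e f / E"
  define p q where "p = inner \<beta> e" and "q = cross2 e \<beta>"
  have "E > 0"
    using nc by (auto simp: E_def e_def collinear_2)
  have Exy: "E * x = inner e f" "E * y = cross2 e f"
    using \<open>E > 0\<close> by (simp_all add: x_def y_def)
  have "E * inner \<beta> f = p * (E * x) + q * (E * y)"
    using inner_cross2_expansion[of e \<beta> f] unfolding Exy by (simp add: E_def p_def q_def inner_commute)
  then have "E * inner \<beta> f = E * (p * x + q * y)"
    by (simp add: algebra_simps)
  then have "p * x + q * y = inner \<beta> f"
    using \<open>E > 0\<close> by simp
  then have "p * x + q * y = inner \<beta> (c - a)" "p * (x - 1) + q * y = inner \<beta> (c - b)"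
    by (simp_all add: f_def p_def e_def algebra_simps inner_diff_right)
  moreover have "p\<^sup>2 + q\<^sup>2 = E * (norm \<beta>)\<^sup>2"
    using inner_square_add_cross2_square[of e \<beta>] by (simp add: E_def p_def q_def inner_commute power2_norm_eq_inner)
  moreover have "(inner \<beta> (a - c))\<^sup>2 = (inner \<beta> (c - a))\<^sup>2"
    by (simp add: inner_diff_right power2_commute)
  ultimately show ?thesis
    using normalized_edge_derivatives_bound[OF _ tan_sq_le_three[OF \<omega>]
        longest_edge_normalized_coordinates[OF assms, folded e_def f_def E_def, folded x_def y_def], of p q] \<omega>
    by (simp add: E_def e_def p_def power2_norm_eq_inner ac_simps)
qed

lemma diameter_convex_hull_le:
  fixes S :: "'a::real_normed_vector set"
  assumes "S \<noteq> {}" and d: "\<And>x y. x \<in> S \<Longrightarrow> y \<in> S \<Longrightarrow> dist x y \<le> d"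
  shows "diameter (convex hull S) \<le> d"
proof -
  have hull_ball: "convex hull S \<subseteq> cball x d" if "S \<subseteq> cball x d" for x
    using that by (intro hull_minimal) auto
  have "S \<subseteq> cball x d" if "x \<in> convex hull S" for x
  proof -
    have "convex hull S \<subseteq> cball y d" if "y \<in> S" for y
      using d that by (intro hull_ball) (auto simp: subset_iff)
    with that show ?thesis
      by (auto simp: subset_iff) (metis dist_commute)
  qed
  then show ?thesis
    using hull_ball assms(1) by (intro diameter_le) (auto simp: dist_norm subset_iff)
qed

lemma diameter_triangle_le:
  fixes a b c :: "'a::real_normed_vector"
  assumes "norm (b - a) \<le> l" "norm (c - b) \<le> l" "norm (a - c) \<le> l"
  shows "diameter (convex hull {a, b, c}) \<le> l"
proof -
  have "0 \<le> l"
    using assms(1) norm_ge_zero order_trans by blast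
  with assms show ?thesis
    by (intro diameter_convex_hull_le) (auto simp: dist_norm norm_minus_commute)
qed

lemma triangle_gradient_bound:
  fixes a b c \<beta> :: "real^2"
  assumes nc: "\<not> collinear {a, b, c}" and \<omega>: "0 \<le> \<omega>" "\<omega> \<le> pi / 3"
    and angles: "\<omega> \<le> tri_angle a b c" "\<omega> \<le> tri_angle b c a" "\<omega> \<le> tri_angle c a b"
  shows "(tan \<omega>)\<^sup>2 * (diameter (convex hull {a, b, c}))\<^sup>2 * (norm \<beta>)\<^sup>2
    \<le> 2 * ((inner \<beta> (b - a))\<^sup>2 + (inner \<beta> (c - b))\<^sup>2 + (inner \<beta> (a - c))\<^sup>2)"
    (is "_ \<le> ?E")
proof -
  have reduce: "(tan \<omega>)\<^sup>2 * (diameter (convex hull {a, b, c}))\<^sup>2 * (norm \<beta>)\<^sup>2 \<le> ?E"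
    if bound: "(tan \<omega>)\<^sup>2 * l\<^sup>2 * (norm \<beta>)\<^sup>2 \<le> ?E"
      and edges: "norm (b - a) \<le> l" "norm (c - b) \<le> l" "norm (a - c) \<le> l" for l
  proof -
    have "(diameter (convex hull {a, b, c}))\<^sup>2 \<le> l\<^sup>2"
      using diameter_triangle_le[OF edges] diameter_ge_0[of "convex hull {a, b, c}"]
      by (intro power_mono) (auto simp: compact_imp_bounded finite_imp_compact_convex_hull)
    then have "(tan \<omega>)\<^sup>2 * (diameter (convex hull {a, b, c}))\<^sup>2 * (norm \<beta>)\<^sup>2 \<le> (tan \<omega>)\<^sup>2 * l\<^sup>2 * (norm \<beta>)\<^sup>2"
      by (intro mult_right_mono mult_left_mono) auto
    with bound show ?thesis
      by linarith
  qed
  have nc': "\<not> collinear {b, c, a}" "\<not> collinear {c, a, b}"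
    using nc by (simp_all add: insert_commute)
  consider "norm (c - b) \<le> norm (b - a)" "norm (a - c) \<le> norm (b - a)"
    | "norm (b - a) \<le> norm (c - b)" "norm (a - c) \<le> norm (c - b)"
    | "norm (b - a) \<le> norm (a - c)" "norm (c - b) \<le> norm (a - c)"
    by linarith
  then show ?thesis
  proof cases
    case 1
    then show ?thesis
      using longest_edge_gradient_bound[OF nc \<omega> angles(1,2), of \<beta>]
      by (intro reduce[of "norm (b - a)"]) (auto simp: norm_minus_commute)
  next
    case 2
    then show ?thesis
      using longest_edge_gradient_bound[OF nc'(1) \<omega> angles(2,3), of \<beta>]
      by (intro reduce[of "norm (c - b)"]) (auto simp: norm_minus_commute ac_simps)
  next
    case 3
    then show ?thesis
      using longest_edge_gradient_bound[OF nc'(2) \<omega> angles(3,1), of \<beta>]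
      by (intro reduce[of "norm (a - c)"]) (auto simp: norm_minus_commute ac_simps)
  qed
qed

lemma c_inv_eq:
  assumes "0 < \<omega>" "\<omega> \<le> pi / 3"
  shows "c_inv \<omega> = sqrt 72 / tan \<omega>"
proof -
  define C s where "C = cos \<omega>" and "s = sin \<omega>"
  have "s > 0"
    using assms by (simp add: s_def sin_gt_zero)
  have "cos (pi / 3) \<le> cos \<omega>"
    using assms by (intro cos_monotone_0_pi_le) auto
  then have "1 / 2 \<le> C"
    by (simp add: C_def cos_60)
  have "C\<^sup>2 + s\<^sup>2 = 1"
    by (simp add: C_def s_def)
  have K: "2 * cot \<omega> - cot (2 * \<omega>) = (3 * C\<^sup>2 + s\<^sup>2) / (2 * s * C)"
    unfolding cot_def sin_double cos_double C_def [symmetric] s_def [symmetric]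
    using \<open>s > 0\<close> \<open>1 / 2 \<le> C\<close> by (simp add: field_simps power2_eq_square)
  have "((3 * C\<^sup>2 + s\<^sup>2) / (2 * s * C))\<^sup>2 - 3 = ((3 * C\<^sup>2 - s\<^sup>2) / (2 * s * C))\<^sup>2"
    using \<open>s > 0\<close> \<open>1 / 2 \<le> C\<close> by (simp add: field_simps power2_eq_square)
  moreover have "(1 / 2)\<^sup>2 \<le> C\<^sup>2"
    using \<open>1 / 2 \<le> C\<close> by (intro power_mono) auto
  then have "0 \<le> (3 * C\<^sup>2 - s\<^sup>2) / (2 * s * C)"
    using \<open>C\<^sup>2 + s\<^sup>2 = 1\<close> \<open>s > 0\<close> \<open>1 / 2 \<le> C\<close> by (simp add: power2_eq_square)
  ultimately have root: "sqrt (((3 * C\<^sup>2 + s\<^sup>2) / (2 * s * C))\<^sup>2 - 3) = (3 * C\<^sup>2 - s\<^sup>2) / (2 * s * C)"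
    by (metis real_sqrt_abs abs_of_nonneg)
  have "24 * cot \<omega> * (2 * cot \<omega> - cot (2 * \<omega>) + sqrt ((2 * cot \<omega> - cot (2 * \<omega>))\<^sup>2 - 3))
      = 72 / (s / C)\<^sup>2"
    unfolding K root unfolding cot_def C_def [symmetric] s_def [symmetric]
    using \<open>s > 0\<close> \<open>1 / 2 \<le> C\<close> by (simp add: field_simps power2_eq_square)
  then show ?thesis
    using \<open>s > 0\<close> \<open>1 / 2 \<le> C\<close>
    by (simp add: c_inv_def tan_def C_def [symmetric] s_def [symmetric] real_sqrt_divide)
qed

lemma diameter_triangle_pos:
  fixes a b c :: "'a::euclidean_space"
  assumes "\<not> collinear {a, b, c}"
  shows "0 < diameter (convex hull {a, b, c})"
proof -
  have "a \<noteq> b"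
    using assms by (auto simp: collinear_2)
  moreover have "dist a b \<le> diameter (convex hull {a, b, c})"
    by (intro diameter_bounded_bound) (auto simp: hull_inc compact_imp_bounded finite_imp_compact_convex_hull)
  ultimately show ?thesis
    by (metis dist_pos_lt order_less_le_trans)
qed

lemma integral_gradient_square_le:
  fixes a b c \<beta> :: "real^2"
  assumes nc: "\<not> collinear {a, b, c}" and \<omega>: "0 < \<omega>" "\<omega> \<le> pi / 3"
    and angles: "\<omega> \<le> tri_angle a b c" "\<omega> \<le> tri_angle b c a" "\<omega> \<le> tri_angle c a b"
  defines "T \<equiv> convex hull {a, b, c}"
  defines "h \<equiv> diameter T"
  shows "integral T (\<lambda>x. (norm \<beta>)\<^sup>2) \<le> 72 / ((tan \<omega>)\<^sup>2 * h\<^sup>2) * integral T (\<lambda>x. (inner \<beta> x + k)\<^sup>2)"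
proof -
  define A where "A = integral T (\<lambda>x. 1 :: real)"
  define E where "E = (inner \<beta> (b - a))\<^sup>2 + (inner \<beta> (c - b))\<^sup>2 + (inner \<beta> (a - c))\<^sup>2"
  have "tan \<omega> > 0"
    using \<omega> pi_gt_zero by (intro tan_gt_zero) linarith+
  have "h > 0"
    using diameter_triangle_pos[OF nc] by (simp add: h_def T_def)
  have "A \<ge> 0"
    by (auto simp: A_def T_def finite_imp_compact_convex_hull
        intro!: integral_nonneg integrable_continuous_compact continuous_intros)
  have "A * ((tan \<omega>)\<^sup>2 * h\<^sup>2 * (norm \<beta>)\<^sup>2) \<le> A * (2 * E)"
    using triangle_gradient_bound[OF nc _ \<omega>(2) angles] \<omega>(1) \<open>A \<ge> 0\<close>
    by (intro mult_left_mono) (simp_all add: h_def T_def E_def)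
  also have "\<dots> \<le> 72 * integral T (\<lambda>x. (inner \<beta> x + k)\<^sup>2)"
    using integral_affine_square_triangle_ge[OF nc, of \<beta> k, folded T_def A_def E_def] by linarith
  finally have "(tan \<omega>)\<^sup>2 * h\<^sup>2 * ((norm \<beta>)\<^sup>2 * A) \<le> 72 * integral T (\<lambda>x. (inner \<beta> x + k)\<^sup>2)"
    by (simp add: algebra_simps)
  moreover have "integral T (\<lambda>x. (norm \<beta>)\<^sup>2) = (norm \<beta>)\<^sup>2 * A"
    using integral_mult_right[of T "(norm \<beta>)\<^sup>2" "\<lambda>x. 1"] by (simp add: A_def)
  ultimately show ?thesis
    using \<open>tan \<omega> > 0\<close> \<open>h > 0\<close> by (simp add: field_simps)
qed

theorem lemma4p4:
  fixes a b c :: "real^2" and \<omega>0 :: real and \<beta> :: "real^2" and k :: real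
    and p :: "real^2 \<Rightarrow> real"
  assumes "\<not> collinear {a, b, c}"
    and "0 < \<omega>0" and "\<omega>0 \<le> pi / 3"
    and "tri_angle a b c \<ge> \<omega>0" and "tri_angle b c a \<ge> \<omega>0" and "tri_angle c a b \<ge> \<omega>0"
    and "\<And>x. p x = inner \<beta> x + k"
  shows "sqrt (integral (convex hull {a, b, c}) (\<lambda>x. (norm \<beta>)\<^sup>2))
           \<le> c_inv \<omega>0 * inverse (diameter (convex hull {a, b, c}))
              * sqrt (integral (convex hull {a, b, c}) (\<lambda>x. (p x)\<^sup>2))"
proof -
  define T h where "T = convex hull {a, b, c}" and "h = diameter T"
  have "tan \<omega>0 > 0"
    using assms(2,3) pi_gt_zero by (intro tan_gt_zero) linarith+
  then have "c_inv \<omega>0 * inverse h \<ge> 0"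
    using c_inv_eq[OF assms(2,3)] diameter_triangle_pos[OF assms(1)] by (simp add: h_def T_def)
  have "integral T (\<lambda>x. (norm \<beta>)\<^sup>2) \<le> (c_inv \<omega>0 * inverse h)\<^sup>2 * integral T (\<lambda>x. (p x)\<^sup>2)"
    using integral_gradient_square_le[OF assms(1-6), of \<beta> k] c_inv_eq[OF assms(2,3)] assms(7)
    by (simp add: T_def h_def power_divide power_mult_distrib divide_inverse power_inverse)
  then have "sqrt (integral T (\<lambda>x. (norm \<beta>)\<^sup>2)) \<le> \<bar>c_inv \<omega>0 * inverse h\<bar> * sqrt (integral T (\<lambda>x. (p x)\<^sup>2))"
    by (metis real_sqrt_le_mono real_sqrt_mult real_sqrt_abs)
  with \<open>c_inv \<omega>0 * inverse h \<ge> 0\<close> show ?thesis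
    by (simp add: T_def h_def)
qed

end
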